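(* Let $\mathcal{A}$ be an infinite set. There exists a continuous locally finite-dimensional map $\eta:\mathfrak{S}(\mathcal{A})\to\boldsymbol{\Sigma}(\mathcal{A})$ such that $\overline{\operatorname{car}_\eta}^*(y)\subseteq\operatorname{car}(y)$ for every $y\in\mathfrak{S}(\mathcal{A})$. Consequently, if $X$ is a space and $\xi:X\to\mathfrak{S}(\mathcal{A})$ is continuous, then $\eta\circ\xi:X\to\boldsymbol{\Sigma}(\mathcal{A})$ is a continuous locally finite-dimensional map with $\overline{\operatorname{car}_{\eta\circ\xi}}^*(p)\subseteq\operatorname{car}_\xi(p)$ for every $p\in X$.
   Context: $\ell_1(\mathcal{A})$ is the Banach space of all $y:\mathcal{A}\to\mathbb{R}$ with $\|y\|_1=\sum_{\alpha}|y(\alpha)|<\infty$; $\mathbf{c}_{00}(\mathcal{A})\subseteq\ell_1(\mathcal{A})$ is the subspace of finitely supported functions. $\mathfrak{S}(\mathcal{A})=\{y\in\ell_1(\mathcal{A}): y(\alpha)\ge0\ \forall\alpha,\ \|y\|_1=1\}$ and $\boldsymbol{\Sigma}(\mathcal{A})=\mathfrak{S}(\mathcal{A})\cap\mathbf{c}_{00}(\mathcal{A})$, both with the $\|\cdot\|_1$-norm topology. $\operatorname{car}(y)=\{\alpha: y(\alpha)\neq0\}$; for a map $\zeta$ into $\mathbb{R}^{\mathcal{A}}$, $\operatorname{car}_\zeta(x)=\operatorname{car}(\zeta[x])$, where $\zeta[x]$ is the value at $x$. A map into a vector space is locally finite-dimensional if every point has an open neighbourhood mapped into a finite-dimensional linear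 subspace. For a cover $\Omega:Z\rightrightarrows\mathcal{A}$ of a space $Z$ (a map assigning nonempty subsets of $\mathcal{A}$), $\overline{\Omega}^*(p)=\bigcap\{\bigcup_{z\in U}\Omega(z): U\subseteq Z \text{ open}, p\in U\}$; equivalently $(\overline{\Omega}^* )^{-1}(\alpha)$ is the closure of $\Omega^{-1}(\alpha)=\{z:\alpha\in\Omega(z)\}$. *)

theory Defs
  imports "HOL-Analysis.Analysis"
begin

text \<open>The index set A is rendered as the universe of a type 'a. Elements of R^A are
  functions 'a \<Rightarrow> real.\<close>

definition ell1 :: "('a \<Rightarrow> real) set" where
  "ell1 = {y. (\<lambda>\<alpha>. \<bar>y \<alpha>\<bar>) summable_on UNIV}"

definition l1norm :: "('a \<Rightarrow> real) \<Rightarrow> real" where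
  "l1norm y = (\<Sum>\<^sub>\<infinity>\<alpha>. \<bar>y \<alpha>\<bar>)"

definition l1dist :: "('a \<Rightarrow> real) \<Rightarrow> ('a \<Rightarrow> real) \<Rightarrow> real" where
  "l1dist y z = l1norm (\<lambda>\<alpha>. y \<alpha> - z \<alpha>)"

definition l1top :: "('a \<Rightarrow> real) set \<Rightarrow> ('a \<Rightarrow> real) topology" where
  "l1top S = subtopology (Metric_space.mtopology ell1 l1dist) S"

definition car :: "('a \<Rightarrow> real) \<Rightarrow> 'a set" where
  "car y = {\<alpha>. y \<alpha> \<noteq> 0}"

definition c00 :: "('a \<Rightarrow> real) set" where
  "c00 = {y \<in> ell1. finite (car y)}"

definition simplexS :: "('a \<Rightarrow> real) set" where
  "simplexS = {y \<in> ell1. (\<forall>\<alpha>. 0 \<le> y \<alpha>) \<and> l1norm y = 1}"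

definition simplexSigma :: "('a \<Rightarrow> real) set" where
  "simplexSigma = simplexS \<inter> c00"

definition fspan :: "('a \<Rightarrow> real) set \<Rightarrow> ('a \<Rightarrow> real) set" where
  "fspan B = {v. \<exists>F c. finite F \<and> F \<subseteq> B \<and> v = (\<lambda>\<alpha>. \<Sum>b\<in>F. c b * b \<alpha>)}"

definition fin_dim_subspace :: "('a \<Rightarrow> real) set \<Rightarrow> bool" where
  "fin_dim_subspace V \<longleftrightarrow> (\<exists>B. finite B \<and> V = fspan B)"

definition locally_fin_dim :: "'b topology \<Rightarrow> ('b \<Rightarrow> ('a \<Rightarrow> real)) \<Rightarrow> bool" where
  "locally_fin_dim X f \<longleftrightarrow>
     (\<forall>x\<in>topspace X. \<exists>U V. openin X U \<and> x \<in> U \<and> fin_dim_subspace V \<and> f ` U \<subseteq> V)"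

definition cover_closure_star :: "'b topology \<Rightarrow> ('b \<Rightarrow> 'a set) \<Rightarrow> 'b \<Rightarrow> 'a set" where
  "cover_closure_star X \<Omega> p = \<Inter> {\<Union> (\<Omega> ` U) | U. openin X U \<and> p \<in> U}"

end

theory Submission
  imports Defs
begin

(* For y in the simplex let m(y) = sup y > 0 and keep only the part of y above half its
   maximum: eta y is (y - m(y)/2)^+ rescaled to mass 1. Its carrier {y > m(y)/2} is finite,
   because y is summable, and contained in car y. Since m and all coordinates are 1-Lipschitz
   for the l1 distance, every z with |z - y|_1 < m(y)/8 has car (eta z) inside the fixed finite
   set {y > m(y)/4} \<subseteq> car y. So near y the map eta takes values in a fixed finite-dimensional
   coordinate space, where it is a quotient of continuous functions with nonvanishing
   denominator. This local finite support yields all three properties of eta, and it pulls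
   back along any continuous xi. *)

subsection \<open>The sequence space l1\<close>

lemma l1norm_nonneg: "0 \<le> l1norm y"
  unfolding l1norm_def by (rule infsum_nonneg) simp

lemma sum_abs_le_l1norm:
  assumes "y \<in> ell1" "finite F"
  shows "(\<Sum>\<alpha>\<in>F. \<bar>y \<alpha>\<bar>) \<le> l1norm y"
  unfolding l1norm_def
  by (rule finite_sum_le_infsum) (use assms in \<open>auto simp: ell1_def\<close>)

lemma abs_le_l1norm: "y \<in> ell1 \<Longrightarrow> \<bar>y \<alpha>\<bar> \<le> l1norm y"
  using sum_abs_le_l1norm[of y "{\<alpha>}"] by simp

lemma ell1_diff:
  assumes "y \<in> ell1" "z \<in> ell1"
  shows "(\<lambda>\<alpha>. y \<alpha> - z \<alpha>) \<in> ell1"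
proof -
  have "(\<lambda>\<alpha>. \<bar>y \<alpha>\<bar> + \<bar>z \<alpha>\<bar>) summable_on UNIV"
    using assms by (intro summable_on_add) (auto simp: ell1_def)
  then show ?thesis
    unfolding ell1_def mem_Collect_eq by (rule summable_on_comparison_test) auto
qed

lemma l1norm_add_le:
  assumes "y \<in> ell1" "z \<in> ell1"
  shows "l1norm (\<lambda>\<alpha>. y \<alpha> + z \<alpha>) \<le> l1norm y + l1norm z"
proof -
  have sum_abs: "(\<lambda>\<alpha>. \<bar>y \<alpha>\<bar> + \<bar>z \<alpha>\<bar>) summable_on UNIV"
    using assms by (intro summable_on_add) (auto simp: ell1_def)
  have "(\<lambda>\<alpha>. \<bar>y \<alpha> + z \<alpha>\<bar>) summable_on UNIV"
    using sum_abs by (rule summable_on_comparison_test) auto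
  then have "l1norm (\<lambda>\<alpha>. y \<alpha> + z \<alpha>) \<le> (\<Sum>\<^sub>\<infinity>\<alpha>. \<bar>y \<alpha>\<bar> + \<bar>z \<alpha>\<bar>)"
    unfolding l1norm_def by (rule infsum_mono[OF _ sum_abs]) auto
  also have "\<dots> = l1norm y + l1norm z"
    unfolding l1norm_def using assms by (intro infsum_add) (auto simp: ell1_def)
  finally show ?thesis .
qed

lemma
  assumes "finite F" "car y \<subseteq> F"
  shows ell1_finite_support: "y \<in> ell1"
    and l1norm_finite_support: "l1norm y = (\<Sum>\<alpha>\<in>F. \<bar>y \<alpha>\<bar>)"
proof -
  have "(\<lambda>\<alpha>. \<bar>y \<alpha>\<bar>) summable_on UNIV \<longleftrightarrow> (\<lambda>\<alpha>. \<bar>y \<alpha>\<bar>) summable_on F"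
    by (rule summable_on_cong_neutral) (use assms in \<open>auto simp: car_def\<close>)
  then show "y \<in> ell1"
    using assms(1) by (simp add: ell1_def)
  have "(\<Sum>\<^sub>\<infinity>\<alpha>. \<bar>y \<alpha>\<bar>) = (\<Sum>\<^sub>\<infinity>\<alpha>\<in>F. \<bar>y \<alpha>\<bar>)"
    by (rule infsum_cong_neutral) (use assms in \<open>auto simp: car_def\<close>)
  then show "l1norm y = (\<Sum>\<alpha>\<in>F. \<bar>y \<alpha>\<bar>)"
    using assms(1) by (simp add: l1norm_def)
qed

lemma finite_abs_greater_ell1:
  assumes "y \<in> ell1" "0 < c"
  shows "finite {\<alpha>. c < \<bar>y \<alpha>\<bar>}"
proof (rule ccontr)
  assume "infinite {\<alpha>. c < \<bar>y \<alpha>\<bar>}"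
  obtain n :: nat where n: "l1norm y / c < n"
    using reals_Archimedean2 by blast
  obtain F where F: "finite F" "F \<subseteq> {\<alpha>. c < \<bar>y \<alpha>\<bar>}" "card F = n"
    using infinite_arbitrarily_large[OF \<open>infinite _\<close>] by blast
  have "real n * c \<le> (\<Sum>\<alpha>\<in>F. \<bar>y \<alpha>\<bar>)"
    using sum_mono[of F "\<lambda>_. c" "\<lambda>\<alpha>. \<bar>y \<alpha>\<bar>"] F by force
  also have "\<dots> \<le> l1norm y"
    using assms(1) F(1) by (rule sum_abs_le_l1norm)
  finally show False
    using n assms(2) by (simp add: field_simps)
qed

lemma Metric_space_ell1: "Metric_space ell1 l1dist"
proof
  fix x y z :: "'a \<Rightarrow> real"
  show "0 \<le> l1dist x y"
    by (simp add: l1dist_def l1norm_nonneg)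
  show "l1dist x y = l1dist y x"
    by (simp add: l1dist_def l1norm_def abs_minus_commute)
  assume xy: "x \<in> ell1" "y \<in> ell1"
  show "l1dist x y = 0 \<longleftrightarrow> x = y"
  proof
    assume "l1dist x y = 0"
    then have "\<bar>x \<alpha> - y \<alpha>\<bar> \<le> 0" for \<alpha>
      using abs_le_l1norm[OF ell1_diff[OF xy], of \<alpha>] by (simp add: l1dist_def)
    then show "x = y" by auto
  qed (simp add: l1dist_def l1norm_def)
  assume "z \<in> ell1"
  then have "l1norm (\<lambda>\<alpha>. (x \<alpha> - y \<alpha>) + (y \<alpha> - z \<alpha>))
      \<le> l1norm (\<lambda>\<alpha>. x \<alpha> - y \<alpha>) + l1norm (\<lambda>\<alpha>. y \<alpha> - z \<alpha>)"
    using xy by (intro l1norm_add_le ell1_diff)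
  then show "l1dist x z \<le> l1dist x y + l1dist y z"
    by (simp add: l1dist_def)
qed

interpretation L1: Metric_space ell1 l1dist
  by (rule Metric_space_ell1)

lemma abs_diff_le_l1dist: "y \<in> ell1 \<Longrightarrow> z \<in> ell1 \<Longrightarrow> \<bar>y \<alpha> - z \<alpha>\<bar> \<le> l1dist y z"
  unfolding l1dist_def by (intro abs_le_l1norm ell1_diff)

lemma topspace_l1top: "topspace (l1top S) = ell1 \<inter> S"
  by (simp add: l1top_def)

lemma openin_l1top_mball: "openin (l1top S) (S \<inter> L1.mball y r)"
  unfolding l1top_def by (rule openin_subtopology_Int2) simp

lemma continuous_map_l1top_Lipschitz:
  assumes "\<And>y z. y \<in> ell1 \<inter> S \<Longrightarrow> z \<in> ell1 \<inter> S \<Longrightarrow> \<bar>f y - f z\<bar> \<le> l1dist y z"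
  shows "continuous_map (l1top S) euclideanreal f"
  unfolding Met_TC.continuous_map_to_metric [simplified]
proof (intro ballI allI impI exI conjI)
  fix y and e :: real
  assume y: "y \<in> topspace (l1top S)" and "0 < e"
  show "openin (l1top S) (S \<inter> L1.mball y e)"
    by (rule openin_l1top_mball)
  show "y \<in> S \<inter> L1.mball y e"
    using y \<open>0 < e\<close> by (auto simp: topspace_l1top)
  fix z assume z: "z \<in> S \<inter> L1.mball y e"
  then have "\<bar>f y - f z\<bar> \<le> l1dist y z"
    using y assms by (auto simp: topspace_l1top)
  with z show "dist (f y) (f z) < e"
    by (simp add: dist_real_def)
qed

lemma continuous_map_coordinate: "continuous_map (l1top S) euclideanreal (\<lambda>y. y \<alpha>)"
  by (rule continuous_map_l1top_Lipschitz) (simp add: abs_diff_le_l1dist)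

lemma car_diff_subset: "car (\<lambda>\<alpha>. y \<alpha> - z \<alpha>) \<subseteq> car y \<union> car z"
  by (auto simp: car_def)

lemma continuous_map_l1_finite_support:
  assumes "finite F"
    and supp: "\<And>x. x \<in> topspace X \<Longrightarrow> car (f x) \<subseteq> F"
    and coord: "\<And>\<alpha>. \<alpha> \<in> F \<Longrightarrow> continuous_map X euclideanreal (\<lambda>x. f x \<alpha>)"
  shows "continuous_map X L1.mtopology f"
  unfolding L1.continuous_map_to_metric
proof (intro ballI allI impI)
  fix x and e :: real
  assume x: "x \<in> topspace X" and "0 < e"
  define g where "g z = (\<Sum>\<alpha>\<in>F. \<bar>f x \<alpha> - f z \<alpha>\<bar>)" for z
  have dist_eq: "l1dist (f x) (f z) = g z" if "z \<in> topspace X" for z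
  proof -
    have "car (\<lambda>\<alpha>. f x \<alpha> - f z \<alpha>) \<subseteq> F"
      using car_diff_subset[of "f x" "f z"] supp[OF x] supp[OF that] by blast
    then show ?thesis
      unfolding l1dist_def g_def by (rule l1norm_finite_support[OF \<open>finite F\<close>])
  qed
  have "continuous_map X euclideanreal g"
    unfolding g_def using \<open>finite F\<close> by (intro continuous_intros coord) auto
  then have "openin X {z \<in> topspace X. g z \<in> {..<e}}"
    by (rule openin_continuous_map_preimage) simp
  moreover have "x \<in> {z \<in> topspace X. g z \<in> {..<e}}"
    using x \<open>0 < e\<close> by (simp add: g_def)
  moreover have "f z \<in> L1.mball (f x) e" if "z \<in> {z \<in> topspace X. g z \<in> {..<e}}" for z
    using that x dist_eq[of z] supp \<open>finite F\<close> by (auto intro: ell1_finite_support)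
  ultimately show "\<exists>U. openin X U \<and> x \<in> U \<and> (\<forall>z\<in>U. f z \<in> L1.mball (f x) e)"
    by blast
qed

subsection \<open>Locally finite carriers\<close>

definition locally_supported_in :: "'b topology \<Rightarrow> ('b \<Rightarrow> 'a \<Rightarrow> real) \<Rightarrow> ('b \<Rightarrow> 'a set) \<Rightarrow> bool"
  where "locally_supported_in X f S \<longleftrightarrow>
    (\<forall>p\<in>topspace X. \<exists>U F. openin X U \<and> p \<in> U \<and> finite F \<and> F \<subseteq> S p \<and> (\<forall>q\<in>U. car (f q) \<subseteq> F))"

lemma locally_supported_inE:
  assumes "locally_supported_in X f S" "p \<in> topspace X"
  obtains U F where "openin X U" "p \<in> U" "finite F" "F \<subseteq> S p" "\<forall>q\<in>U. car (f q) \<subseteq> F"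
  using assms unfolding locally_supported_in_def by meson

lemma finite_support_in_fspan:
  assumes "finite F" "car v \<subseteq> F"
  shows "v \<in> fspan ((\<lambda>\<alpha>. indicator {\<alpha>}) ` F)"
proof -
  have inj: "inj_on (\<lambda>\<alpha>. indicator {\<alpha>} :: 'a \<Rightarrow> real) F"
    by (rule inj_onI) (metis indicator_eq_1_iff singleton_iff)
  define c where "c b = (\<Sum>\<gamma>\<in>F. b \<gamma> * v \<gamma>)" for b :: "'a \<Rightarrow> real"
  have c_indicator: "c (indicator {\<alpha>}) = v \<alpha>" if "\<alpha> \<in> F" for \<alpha>
  proof -
    have "c (indicator {\<alpha>}) = (\<Sum>\<gamma>\<in>F. if \<alpha> = \<gamma> then v \<gamma> else 0)"
      unfolding c_def by (intro sum.cong) auto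
    with that \<open>finite F\<close> show ?thesis
      by simp
  qed
  have "v \<beta> = (\<Sum>b\<in>(\<lambda>\<alpha>. indicator {\<alpha>}) ` F. c b * b \<beta>)" for \<beta>
  proof -
    have "v \<beta> = (if \<beta> \<in> F then v \<beta> else 0)"
      using assms(2) by (auto simp: car_def)
    also have "\<dots> = (\<Sum>\<alpha>\<in>F. if \<beta> = \<alpha> then v \<alpha> else 0)"
      using \<open>finite F\<close> by simp
    also have "\<dots> = (\<Sum>\<alpha>\<in>F. c (indicator {\<alpha>}) * indicator {\<alpha>} \<beta>)"
      by (intro sum.cong) (auto simp: c_indicator)
    also have "\<dots> = (\<Sum>b\<in>(\<lambda>\<alpha>. indicator {\<alpha>}) ` F. c b * b \<beta>)"
      by (simp add: sum.reindex[OF inj])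
    finally show ?thesis .
  qed
  then show ?thesis
    unfolding fspan_def using \<open>finite F\<close>
    by (intro CollectI exI[of _ "(\<lambda>\<alpha>. indicator {\<alpha>}) ` F"] exI[of _ c] conjI) (auto simp: fun_eq_iff)
qed

lemma locally_supported_in_imp_locally_fin_dim:
  assumes "locally_supported_in X f S"
  shows "locally_fin_dim X f"
  unfolding locally_fin_dim_def
proof
  fix p assume "p \<in> topspace X"
  with assms obtain U F where U: "openin X U" "p \<in> U" and "finite F"
    and supp: "\<forall>q\<in>U. car (f q) \<subseteq> F"
    by (rule locally_supported_inE)
  have "fin_dim_subspace (fspan ((\<lambda>\<alpha>. indicator {\<alpha>}) ` F))"
    unfolding fin_dim_subspace_def using \<open>finite F\<close> by blast
  moreover have "f ` U \<subseteq> fspan ((\<lambda>\<alpha>. indicator {\<alpha>}) ` F)"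
    using finite_support_in_fspan[OF \<open>finite F\<close>] supp by blast
  ultimately show "\<exists>U V. openin X U \<and> p \<in> U \<and> fin_dim_subspace V \<and> f ` U \<subseteq> V"
    using U by blast
qed

lemma locally_supported_in_imp_cover_closure_star_subset:
  assumes "locally_supported_in X f S" "p \<in> topspace X"
  shows "cover_closure_star X (\<lambda>q. car (f q)) p \<subseteq> S p"
proof -
  obtain U F where "openin X U" "p \<in> U" "F \<subseteq> S p" and supp: "\<forall>q\<in>U. car (f q) \<subseteq> F"
    using assms by (rule locally_supported_inE)
  then have "cover_closure_star X (\<lambda>q. car (f q)) p \<subseteq> \<Union> ((\<lambda>q. car (f q)) ` U)"
    unfolding cover_closure_star_def by (intro Inter_lower) blast
  also have "\<dots> \<subseteq> S p"
    using \<open>F \<subseteq> S p\<close> supp by blast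
  finally show ?thesis .
qed

lemma locally_supported_in_compose:
  assumes "continuous_map X Y g" "locally_supported_in Y f S"
  shows "locally_supported_in X (f \<circ> g) (S \<circ> g)"
  unfolding locally_supported_in_def
proof
  fix p assume p: "p \<in> topspace X"
  then have "g p \<in> topspace Y"
    using continuous_map_image_subset_topspace[OF assms(1)] by blast
  with assms(2) obtain U F where U: "openin Y U" "g p \<in> U" and F: "finite F" "F \<subseteq> S (g p)"
    and supp: "\<forall>z\<in>U. car (f z) \<subseteq> F"
    by (rule locally_supported_inE)
  have "openin X {q \<in> topspace X. g q \<in> U}"
    using assms(1) U(1) by (rule openin_continuous_map_preimage)
  with p U(2) F supp show "\<exists>V F. openin X V \<and> p \<in> V \<and> finite F \<and> F \<subseteq> (S \<circ> g) p \<and> (\<forall>q\<in>V. car ((f \<circ> g) q) \<subseteq> F)"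
    by (intro exI[of _ "{q \<in> topspace X. g q \<in> U}"] exI[of _ F]) auto
qed

subsection \<open>Truncation below half the maximum\<close>

definition peak :: "('a \<Rightarrow> real) \<Rightarrow> real"
  where "peak y = Sup (range y)"

definition upper_half :: "('a \<Rightarrow> real) \<Rightarrow> 'a \<Rightarrow> real"
  where "upper_half y \<alpha> = max (y \<alpha> - peak y / 2) 0"

definition eta :: "('a \<Rightarrow> real) \<Rightarrow> 'a \<Rightarrow> real"
  where "eta y \<alpha> = upper_half y \<alpha> / sum (upper_half y) (car (upper_half y))"

lemma simplexS_ell1: "y \<in> simplexS \<Longrightarrow> y \<in> ell1"
  by (simp add: simplexS_def)

lemma simplexS_nonneg: "y \<in> simplexS \<Longrightarrow> 0 \<le> y \<alpha>"
  by (simp add: simplexS_def)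

lemma simplexS_le_1: "y \<in> simplexS \<Longrightarrow> y \<alpha> \<le> 1"
  using abs_le_l1norm[of y \<alpha>] by (auto simp: simplexS_def)

lemma bdd_above_simplexS: "y \<in> simplexS \<Longrightarrow> bdd_above (range y)"
  by (rule bdd_aboveI[where M = 1]) (auto simp: simplexS_le_1)

lemma le_peak: "y \<in> simplexS \<Longrightarrow> y \<alpha> \<le> peak y"
  unfolding peak_def by (rule cSup_upper) (auto simp: bdd_above_simplexS)

lemma peak_le: "(\<And>\<alpha>. y \<alpha> \<le> c) \<Longrightarrow> peak y \<le> c"
  unfolding peak_def by (rule cSup_least) auto

lemma peak_pos:
  assumes "y \<in> simplexS"
  shows "0 < peak y"
proof -
  have "y \<noteq> (\<lambda>_. 0)"
    using assms by (auto simp: simplexS_def l1norm_def)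
  then obtain \<alpha> where "y \<alpha> \<noteq> 0"
    by auto
  with simplexS_nonneg[OF assms] have "0 < y \<alpha>"
    by (simp add: order_less_le)
  also have "\<dots> \<le> peak y"
    using assms by (rule le_peak)
  finally show ?thesis .
qed

lemma abs_peak_diff_le:
  assumes "y \<in> simplexS" "z \<in> simplexS"
  shows "\<bar>peak y - peak z\<bar> \<le> l1dist y z"
proof -
  have coord: "\<bar>y \<alpha> - z \<alpha>\<bar> \<le> l1dist y z" for \<alpha>
    using assms by (intro abs_diff_le_l1dist simplexS_ell1)
  have "peak y \<le> peak z + l1dist y z"
  proof (rule peak_le)
    show "y \<alpha> \<le> peak z + l1dist y z" for \<alpha>
      using coord[of \<alpha>] le_peak[OF assms(2), of \<alpha>] by linarith
  qed
  moreover have "peak z \<le> peak y + l1dist y z"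
  proof (rule peak_le)
    show "z \<alpha> \<le> peak y + l1dist y z" for \<alpha>
      using coord[of \<alpha>] le_peak[OF assms(1), of \<alpha>] by linarith
  qed
  ultimately show ?thesis
    by linarith
qed

lemma continuous_map_peak: "continuous_map (l1top simplexS) euclideanreal peak"
  by (rule continuous_map_l1top_Lipschitz) (simp add: abs_peak_diff_le)

lemma finite_greater_simplexS:
  assumes "y \<in> simplexS" "0 < t"
  shows "finite {\<alpha>. t < y \<alpha>}"
  using finite_abs_greater_ell1[OF simplexS_ell1[OF assms(1)] assms(2)] simplexS_nonneg[OF assms(1)]
  by simp

lemma car_upper_half: "car (upper_half y) = {\<alpha>. peak y / 2 < y \<alpha>}"
  by (auto simp: car_def upper_half_def)

lemma finite_car_upper_half:
  assumes "y \<in> simplexS"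
  shows "finite (car (upper_half y))"
  unfolding car_upper_half using peak_pos[OF assms] by (intro finite_greater_simplexS[OF assms]) simp

lemma sum_upper_half_pos:
  assumes "y \<in> simplexS"
  shows "0 < sum (upper_half y) (car (upper_half y))"
proof -
  have "peak y / 2 < Sup (range y)"
    using peak_pos[OF assms] by (simp add: peak_def)
  then obtain \<alpha> where "peak y / 2 < y \<alpha>"
    using less_cSupD[of "range y" "peak y / 2"] by auto
  then show ?thesis
    using finite_car_upper_half[OF assms]
    by (intro sum_pos2[of _ \<alpha>]) (auto simp: car_upper_half upper_half_def)
qed

lemma car_eta: "y \<in> simplexS \<Longrightarrow> car (eta y) = car (upper_half y)"
  using sum_upper_half_pos[of y] by (auto simp: car_def eta_def)

lemma eta_in_simplexSigma:
  assumes "y \<in> simplexS"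
  shows "eta y \<in> simplexSigma"
proof -
  note finite = finite_car_upper_half[OF assms] and car = car_eta[OF assms]
  have "l1norm (eta y) = (\<Sum>\<alpha>\<in>car (upper_half y). \<bar>eta y \<alpha>\<bar>)"
    using finite car by (intro l1norm_finite_support) auto
  also have "\<dots> = 1"
    using sum_upper_half_pos[OF assms]
    by (simp add: eta_def upper_half_def flip: sum_divide_distrib)
  moreover have "0 \<le> eta y \<alpha>" for \<alpha>
    using sum_upper_half_pos[OF assms] unfolding eta_def
    by (intro divide_nonneg_pos) (simp_all add: upper_half_def)
  ultimately show ?thesis
    using finite car ell1_finite_support[of "car (upper_half y)" "eta y"]
    by (auto simp: simplexSigma_def simplexS_def c00_def)
qed

lemma car_upper_half_near:
  assumes "y \<in> simplexS" "z \<in> simplexS" "l1dist y z < peak y / 8"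
  shows "car (upper_half z) \<subseteq> {\<alpha>. peak y / 4 < y \<alpha>}"
proof
  fix \<alpha> assume "\<alpha> \<in> car (upper_half z)"
  moreover have "\<bar>peak y - peak z\<bar> \<le> l1dist y z"
    using assms(1,2) by (rule abs_peak_diff_le)
  moreover have "\<bar>y \<alpha> - z \<alpha>\<bar> \<le> l1dist y z"
    using assms(1,2) by (intro abs_diff_le_l1dist simplexS_ell1)
  \<comment> \<open>With d = l1dist y z: y \<alpha> \<ge> z \<alpha> - d > peak z / 2 - d \<ge> peak y / 2 - 3 d / 2 > peak y / 4.\<close>
  ultimately show "\<alpha> \<in> {\<alpha>. peak y / 4 < y \<alpha>}"
    using assms(3) peak_pos[OF assms(1)] by (auto simp: car_upper_half)
qed

lemma continuous_map_upper_half: "continuous_map (l1top simplexS) euclideanreal (\<lambda>y. upper_half y \<alpha>)"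
  unfolding upper_half_def by (intro continuous_intros continuous_map_coordinate continuous_map_peak) auto

lemma locally_supported_in_eta: "locally_supported_in (l1top simplexS) (eta :: ('a \<Rightarrow> real) \<Rightarrow> _) car"
  unfolding locally_supported_in_def topspace_l1top
proof
  fix y :: "'a \<Rightarrow> real" assume "y \<in> ell1 \<inter> simplexS"
  then have y: "y \<in> simplexS"
    by blast
  show "\<exists>U F. openin (l1top simplexS) U \<and> y \<in> U \<and> finite F \<and> F \<subseteq> car y \<and> (\<forall>z\<in>U. car (eta z) \<subseteq> F)"
  proof (intro exI conjI ballI)
    show "openin (l1top simplexS) (simplexS \<inter> L1.mball y (peak y / 8))"
      by (rule openin_l1top_mball)
    show "y \<in> simplexS \<inter> L1.mball y (peak y / 8)"
      using y peak_pos[OF y] simplexS_ell1[OF y] by simp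
    show "finite {\<alpha>. peak y / 4 < y \<alpha>}"
      using peak_pos[OF y] by (intro finite_greater_simplexS[OF y]) simp
    show "{\<alpha>. peak y / 4 < y \<alpha>} \<subseteq> car y"
      using peak_pos[OF y] by (auto simp: car_def)
    fix z assume "z \<in> simplexS \<inter> L1.mball y (peak y / 8)"
    then show "car (eta z) \<subseteq> {\<alpha>. peak y / 4 < y \<alpha>}"
      using car_eta car_upper_half_near[OF y] by auto
  qed
qed

lemma continuous_map_eta_near:
  assumes y: "y \<in> simplexS"
  shows "continuous_map (subtopology (l1top simplexS) (simplexS \<inter> L1.mball y (peak y / 8))) L1.mtopology eta"
    (is "continuous_map ?N _ _")
proof -
  define F where "F = {\<alpha>. peak y / 4 < y \<alpha>}"
  have "finite F"
    unfolding F_def using peak_pos[OF y] by (intro finite_greater_simplexS[OF y]) simp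
  have near: "z \<in> simplexS" "car (upper_half z) \<subseteq> F" if "z \<in> topspace ?N" for z
    using that car_upper_half_near[OF y] by (auto simp: topspace_l1top F_def)
  have normaliser: "sum (upper_half z) F = sum (upper_half z) (car (upper_half z))"
    if "z \<in> topspace ?N" for z
    using near[OF that] \<open>finite F\<close> by (intro sum.mono_neutral_right) (auto simp: car_def)
  have denominator: "sum (upper_half z) F \<noteq> 0" if "z \<in> topspace ?N" for z
    using normaliser[OF that] sum_upper_half_pos[OF near(1)[OF that]] by simp
  show ?thesis
  proof (rule continuous_map_l1_finite_support[OF \<open>finite F\<close>])
    show "car (eta z) \<subseteq> F" if "z \<in> topspace ?N" for z
      using near[OF that] car_eta[OF near(1)[OF that]] by simp
    show "continuous_map ?N euclideanreal (\<lambda>z. eta z \<alpha>)" for \<alpha>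
    proof (rule continuous_map_eq)
      show "continuous_map ?N euclideanreal (\<lambda>z. upper_half z \<alpha> / sum (upper_half z) F)"
        using \<open>finite F\<close> denominator
        by (intro continuous_intros continuous_map_from_subtopology continuous_map_upper_half) auto
      show "upper_half z \<alpha> / sum (upper_half z) F = eta z \<alpha>" if "z \<in> topspace ?N" for z
        using normaliser[OF that] by (simp add: eta_def)
    qed
  qed
qed

lemma continuous_map_eta:
  "continuous_map (l1top simplexS) (l1top simplexSigma) (eta :: ('a \<Rightarrow> real) \<Rightarrow> _)"
proof -
  have "continuous_map (l1top simplexS) L1.mtopology (eta :: ('a \<Rightarrow> real) \<Rightarrow> _)"
  proof (rule pasting_lemma[where I = simplexS and T = "\<lambda>y. simplexS \<inter> L1.mball y (peak y / 8)"
        and f = "\<lambda>_. eta"])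
    show "openin (l1top simplexS) (simplexS \<inter> L1.mball y (peak y / 8))" for y :: "'a \<Rightarrow> real"
      by (rule openin_l1top_mball)
    show "continuous_map (subtopology (l1top simplexS) (simplexS \<inter> L1.mball y (peak y / 8)))
        L1.mtopology eta" if "y \<in> simplexS" for y :: "'a \<Rightarrow> real"
      using that by (rule continuous_map_eta_near)
    show "\<exists>j. j \<in> simplexS \<and> y \<in> simplexS \<inter> L1.mball j (peak j / 8) \<and> eta y = eta y"
      if "y \<in> topspace (l1top simplexS)" for y :: "'a \<Rightarrow> real"
      using that peak_pos by (intro exI[of _ y]) (auto simp: topspace_l1top)
  qed simp
  moreover have "eta ` topspace (l1top simplexS) \<subseteq> simplexSigma"
    using eta_in_simplexSigma by (auto simp: topspace_l1top)
  ultimately show ?thesis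
    unfolding l1top_def[of simplexSigma] continuous_map_in_subtopology by blast
qed

theorem theorem3p1:
  assumes "infinite (UNIV :: 'a set)"
  shows "\<exists>\<eta> :: ('a \<Rightarrow> real) \<Rightarrow> ('a \<Rightarrow> real).
     continuous_map (l1top simplexS) (l1top simplexSigma) \<eta> \<and>
     locally_fin_dim (l1top simplexS) \<eta> \<and>
     (\<forall>y\<in>simplexS. cover_closure_star (l1top simplexS) (\<lambda>z. car (\<eta> z)) y \<subseteq> car y) \<and>
     (\<forall>(X :: 'b topology) \<xi>. continuous_map X (l1top simplexS) \<xi> \<longrightarrow>
        continuous_map X (l1top simplexSigma) (\<eta> \<circ> \<xi>) \<and>
        locally_fin_dim X (\<eta> \<circ> \<xi>) \<and>
        (\<forall>p\<in>topspace X. cover_closure_star X (\<lambda>q. car ((\<eta> \<circ> \<xi>) q)) p \<subseteq> car (\<xi> p)))"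
  \<comment> \<open>The construction works for every index set.\<close>
proof (intro exI[of _ eta] conjI allI impI ballI)
  show "continuous_map (l1top simplexS) (l1top simplexSigma) eta"
    by (rule continuous_map_eta)
  show "locally_fin_dim (l1top simplexS) eta"
    using locally_supported_in_eta by (rule locally_supported_in_imp_locally_fin_dim)
  show "cover_closure_star (l1top simplexS) (\<lambda>z. car (eta z)) y \<subseteq> car y" if "y \<in> simplexS" for y :: "'a \<Rightarrow> real"
    using locally_supported_in_eta
    by (rule locally_supported_in_imp_cover_closure_star_subset) (simp add: topspace_l1top simplexS_ell1 that)
  fix X :: "'b topology" and \<xi> :: "'b \<Rightarrow> 'a \<Rightarrow> real"
  assume \<xi>: "continuous_map X (l1top simplexS) \<xi>"
  then have supp: "locally_supported_in X (eta \<circ> \<xi>) (car \<circ> \<xi>)"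
    using locally_supported_in_eta by (rule locally_supported_in_compose)
  show "continuous_map X (l1top simplexSigma) (eta \<circ> \<xi>)"
    using \<xi> continuous_map_eta by (rule continuous_map_compose)
  show "locally_fin_dim X (eta \<circ> \<xi>)"
    using supp by (rule locally_supported_in_imp_locally_fin_dim)
  show "cover_closure_star X (\<lambda>q. car ((eta \<circ> \<xi>) q)) p \<subseteq> car (\<xi> p)" if "p \<in> topspace X" for p
    using locally_supported_in_imp_cover_closure_star_subset[OF supp that] by simp
qed

end
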